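(* Let $\Phi_W$ be a pmf on a countable set $\mathcal W$, $\Phi_{U|W}$ a conditional pmf on a countable $\mathcal U$, and $\Phi_{V|W,U}$ a channel to a countable $\mathcal V$; let $\Phi$ denote the joint $\Phi_W\Phi_{U|W}\Phi_{V|W,U}$ and $Q_V=\Phi_V$ its $V$-marginal. Let $\{U(w)\}_{w\in\mathcal W}$ be a random codebook with the $U(w)$ mutually independent and $U(w)\sim\Phi_{U|W=w}$, and let $P_V(v)=\sum_{w}\Phi_W(w)\Phi_{V|W,U}(v|w,U(w))$. Then for every $\tau\in\mathbb R$, $$\mathbf E\|P_V-Q_V\|_{TV}\le\mathbf P_\Phi(\mathcal A_\tau^c)+\delta_\Phi(\tau),$$ where $\mathcal A_\tau=\{(w,u,v): i_\Phi(w,u;v)-i_\Phi(w)\le\tau\}$ and $$\delta_\Phi(\tau)=\tfrac12\,\mathbf E_{\Phi_V}\sqrt{\mathbf E_{\Phi_{W,U|V}}\,2^{\,i_\Phi(W,U;V)-i_\Phi(W)}\mathbf 1_{\mathcal A_\tau}(W,U,V)}\ \le\ \tfrac12 2^{\tau/2}.$$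
   Context: The expectation on the left is over the random codebook. Information density: $i_\Phi(a;b)=\log\frac{\Phi_{A,B}(a,b)}{\Phi_A(a)\Phi_B(b)}$; here $i_\Phi(w,u;v)=\log\frac{\Phi_{V|W,U}(v|w,u)}{\Phi_V(v)}$. Self-information $i_\Phi(w)=\log\frac{1}{\Phi_W(w)}$. Logarithms base 2. Total variation is half the $\ell_1$ distance. *)

theory Defs
  imports "HOL-Probability.Probability"
begin

definition joint_pmf :: "'w pmf \<Rightarrow> ('w \<Rightarrow> 'u pmf) \<Rightarrow> ('w \<Rightarrow> 'u \<Rightarrow> 'v pmf) \<Rightarrow> ('w \<times> 'u \<times> 'v) pmf" where
  "joint_pmf PW PU PV =
     bind_pmf PW (\<lambda>w. bind_pmf (PU w) (\<lambda>u. map_pmf (\<lambda>v. (w, u, v)) (PV w u)))"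

definition marg_V :: "'w pmf \<Rightarrow> ('w \<Rightarrow> 'u pmf) \<Rightarrow> ('w \<Rightarrow> 'u \<Rightarrow> 'v pmf) \<Rightarrow> 'v pmf" where
  "marg_V PW PU PV = map_pmf (\<lambda>(w, u, v). v) (joint_pmf PW PU PV)"

definition idens :: "'w pmf \<Rightarrow> ('w \<Rightarrow> 'u pmf) \<Rightarrow> ('w \<Rightarrow> 'u \<Rightarrow> 'v pmf) \<Rightarrow> 'w \<Rightarrow> 'u \<Rightarrow> 'v \<Rightarrow> real" where
  "idens PW PU PV w u v = log 2 (pmf (PV w u) v / pmf (marg_V PW PU PV) v)"

definition selfinfo :: "'w pmf \<Rightarrow> 'w \<Rightarrow> real" where
  "selfinfo PW w = log 2 (1 / pmf PW w)"

definition A_set :: "'w pmf \<Rightarrow> ('w \<Rightarrow> 'u pmf) \<Rightarrow> ('w \<Rightarrow> 'u \<Rightarrow> 'v pmf) \<Rightarrow> real \<Rightarrow> ('w \<times> 'u \<times> 'v) set" where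
  "A_set PW PU PV \<tau> = {(w, u, v). idens PW PU PV w u v - selfinfo PW w \<le> \<tau>}"

text \<open>delta_Phi(tau); the conditional Phi_{W,U|V=v} is cond_pmf of the joint on {V = v}.\<close>
definition delta :: "'w pmf \<Rightarrow> ('w \<Rightarrow> 'u pmf) \<Rightarrow> ('w \<Rightarrow> 'u \<Rightarrow> 'v pmf) \<Rightarrow> real \<Rightarrow> real" where
  "delta PW PU PV \<tau> = 1 / 2 * measure_pmf.expectation (marg_V PW PU PV)
     (\<lambda>v. sqrt (measure_pmf.expectation (cond_pmf (joint_pmf PW PU PV) {x. snd (snd x) = v})
        (\<lambda>(w, u, v'). 2 powr (idens PW PU PV w u v' - selfinfo PW w)
                       * indicator (A_set PW PU PV \<tau>) (w, u, v'))))"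

definition induced_PV :: "'w pmf \<Rightarrow> ('w \<Rightarrow> 'u \<Rightarrow> 'v pmf) \<Rightarrow> ('w \<Rightarrow> 'u) \<Rightarrow> 'v \<Rightarrow> real" where
  "induced_PV PW PV c v = measure_pmf.expectation PW (\<lambda>w. pmf (PV w (c w)) v)"

definition tv_dist :: "('v \<Rightarrow> real) \<Rightarrow> ('v \<Rightarrow> real) \<Rightarrow> real" where
  "tv_dist P Q = (\<Sum>\<^sub>\<infinity>v. \<bar>P v - Q v\<bar>) / 2"

definition codebook :: "('w \<Rightarrow> 'u pmf) \<Rightarrow> ('w \<Rightarrow> 'u) measure" where
  "codebook PU = PiM UNIV (\<lambda>w. measure_pmf (PU w))"

end

theory Submission
  imports Defs
begin

text \<open>
  Fix tau, write A for A_tau and Q for the output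
  marginal Q_V.  For an output v and a set B of triples let X_B(v) be the codebook average
  sum_w Phi_W(w) Phi_{V|W,U}(v|w,U(w)) 1_B(w,U(w),v).  Then P_V(v) = X_A(v) + X_{A^c}(v) and
  Q(v) = E X_A(v) + E X_{A^c}(v), hence
    |P_V(v) - Q(v)| <= |X_A(v) - E X_A(v)| + X_{A^c}(v) + E X_{A^c}(v).
  After averaging over the codebook the complementary parts contribute 2 E X_{A^c}(v), which
  sums over v to 2 P(A^c).  Independence of the codewords bounds the variance of X_A(v) by a
  diagonal term sum_w Phi_W(w)^2 E[...^2], so the mean absolute deviation of X_A(v) is at most
  its square root; an explicit computation with the information densities shows that this
  square root is Q(v) times the square root of the conditional moment inside delta, and summing
  over v yields 2 delta.  The bound delta <= 2 powr (tau/2) / 2 holds because the integrand of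
  the conditional moment is at most 2 powr tau on A.
\<close>


lemma pmf_integrable_bounded:
  fixes f :: "'a \<Rightarrow> real"
  assumes "\<And>x. 0 \<le> f x" "\<And>x. f x \<le> B"
  shows "integrable (measure_pmf p) f"
  by (rule measure_pmf.integrable_const_bound[where B=B]) (use assms in \<open>auto intro: order_trans\<close>)

lemma pmf_expectation_bounds:
  fixes f :: "'a \<Rightarrow> real"
  assumes "\<And>x. 0 \<le> f x" "\<And>x. f x \<le> B"
  shows "0 \<le> measure_pmf.expectation p f" "measure_pmf.expectation p f \<le> B"
proof -
  show "0 \<le> measure_pmf.expectation p f"
    by (rule integral_nonneg_AE) (use assms in auto)
  show "measure_pmf.expectation p f \<le> B"
    using pmf_integrable_bounded[OF assms] by (rule measure_pmf.integral_le_const) (use assms in auto)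
qed

lemma pmf_expectation_add:
  fixes f g :: "'a \<Rightarrow> real"
  assumes "\<And>x. 0 \<le> f x" "\<And>x. f x \<le> B" "\<And>x. 0 \<le> g x" "\<And>x. g x \<le> B"
  shows "measure_pmf.expectation p (\<lambda>x. f x + g x) = measure_pmf.expectation p f + measure_pmf.expectation p g"
  using pmf_integrable_bounded[of f B p] pmf_integrable_bounded[of g B p] assms by simp

lemma (in prob_space) ennreal_expectation_bounded:
  fixes f :: "'a \<Rightarrow> real"
  assumes "f \<in> borel_measurable M" "\<And>x. 0 \<le> f x" "\<And>x. f x \<le> B"
  shows "ennreal (expectation f) = (\<integral>\<^sup>+x. ennreal (f x) \<partial>M)"
proof -
  have "integrable M f"
    by (rule integrable_const_bound[where B=B]) (use assms in \<open>auto intro: order_trans\<close>)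
  then show ?thesis using assms(2) by (subst nn_integral_eq_integral) auto
qed

lemma (in prob_space) expectation_abs_deviation_le:
  fixes X :: "'a \<Rightarrow> real"
  assumes X: "integrable M X" and X2: "integrable M (\<lambda>x. (X x)\<^sup>2)"
  shows "expectation (\<lambda>x. \<bar>X x - expectation X\<bar>) \<le> sqrt (variance X)"
proof -
  let ?D = "\<lambda>x. \<bar>X x - expectation X\<bar>"
  have "(\<lambda>x. (?D x)\<^sup>2) = (\<lambda>x. (X x)\<^sup>2 - 2 * expectation X * X x + (expectation X)\<^sup>2)"
    by (auto simp: power2_diff algebra_simps)
  then have D2: "integrable M (\<lambda>x. (?D x)\<^sup>2)" using X X2 by simp
  have "(expectation ?D)\<^sup>2 \<le> expectation (\<lambda>x. (?D x)\<^sup>2)"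
    by (rule jensens_inequality[where I=UNIV]) (use X D2 in \<open>auto simp: convex_power2\<close>)
  also have "\<dots> = variance X" by simp
  finally show ?thesis by (simp add: real_le_rsqrt)
qed

lemma nn_integral_pmf_swap:
  fixes p :: "'i::countable pmf" and f :: "'i \<Rightarrow> 'a \<Rightarrow> ennreal"
  assumes "\<And>i. f i \<in> borel_measurable M"
  shows "(\<integral>\<^sup>+x. \<integral>\<^sup>+i. f i x \<partial>p \<partial>M) = (\<integral>\<^sup>+i. \<integral>\<^sup>+x. f i x \<partial>M \<partial>p)"
proof -
  have "(\<integral>\<^sup>+x. \<integral>\<^sup>+i. f i x \<partial>p \<partial>M) = (\<integral>\<^sup>+x. \<integral>\<^sup>+i. ennreal (pmf p i) * f i x \<partial>count_space UNIV \<partial>M)"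
    by (simp add: nn_integral_measure_pmf)
  also have "\<dots> = (\<integral>\<^sup>+i. \<integral>\<^sup>+x. ennreal (pmf p i) * f i x \<partial>M \<partial>count_space UNIV)"
    by (rule nn_integral_count_space_nn_integral) (use assms in auto)
  also have "\<dots> = (\<integral>\<^sup>+i. \<integral>\<^sup>+x. f i x \<partial>M \<partial>p)"
    by (simp add: nn_integral_cmult assms nn_integral_measure_pmf)
  finally show ?thesis .
qed

text \<open>An infinite sum of nonnegative reals is dominated by the counting integral (equal when summable, 0 otherwise).\<close>
lemma ennreal_infsum_le_nn_integral:
  fixes g :: "'a \<Rightarrow> real"
  assumes "\<And>x. 0 \<le> g x"
  shows "ennreal (\<Sum>\<^sub>\<infinity>x. g x) \<le> (\<integral>\<^sup>+x. ennreal (g x) \<partial>count_space UNIV)"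
proof (cases "g summable_on UNIV")
  case True
  then have "(\<lambda>x. norm (g x)) summable_on UNIV" using assms by simp
  then have "Infinite_Set_Sum.abs_summable_on g UNIV" using abs_summable_equivalent by blast
  then show ?thesis
    using nn_integral_conv_infsetsum[of g UNIV] infsetsum_infsum[of g UNIV] assms by simp
next
  case False
  then show ?thesis by (simp add: infsum_not_exists)
qed

lemma prob_space_codebook: "prob_space (codebook PU)"
  unfolding codebook_def by (intro prob_space_PiM) (simp add: prob_space_measure_pmf)

lemma codebook_component_measurable [measurable]:
  "(\<lambda>c. c w) \<in> codebook PU \<rightarrow>\<^sub>M count_space UNIV"
proof -
  have "(\<lambda>c. c w) \<in> codebook PU \<rightarrow>\<^sub>M measure_pmf (PU w)"
    unfolding codebook_def by (rule measurable_component_singleton) simp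
  then show ?thesis by simp
qed

lemma nn_integral_codebook_component:
  "(\<integral>\<^sup>+c. g (c w) \<partial>codebook PU) = (\<integral>\<^sup>+u. g u \<partial>PU w)"
proof -
  have "distr (codebook PU) (measure_pmf (PU w)) (\<lambda>c. c w) = measure_pmf (PU w)"
    unfolding codebook_def by (rule distr_PiM_component) (auto simp: prob_space_measure_pmf)
  then show ?thesis
    using nn_integral_distr[of "\<lambda>c. c w" "codebook PU" "measure_pmf (PU w)" g] by simp
qed

lemma codebook_fun_measurable [measurable]:
  "(\<lambda>c. (f (c w) :: 'b::topological_space)) \<in> borel_measurable (codebook PU)"
  by (rule measurable_compose[OF codebook_component_measurable borel_measurable_count_space])

lemma codebook_fun2_measurable [measurable]:
  fixes PU :: "'w \<Rightarrow> 'u::countable pmf" and f :: "'u \<Rightarrow> 'u \<Rightarrow> 'b::topological_space"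
  shows "(\<lambda>c. f (c w) (c w')) \<in> borel_measurable (codebook PU)"
  by (rule measurable_compose_countable[where f="\<lambda>i c. f i (c w')" and g="\<lambda>c. c w"])
    (rule codebook_fun_measurable codebook_component_measurable)+

lemma codebook_pmf_pair_measurable:
  fixes h :: "'w::countable \<Rightarrow> ('w \<Rightarrow> 'u::countable) \<Rightarrow> 'b::topological_space"
  assumes "\<And>w. h w \<in> borel_measurable (codebook PU)"
  shows "(\<lambda>(c, w). h w c) \<in> borel_measurable (codebook PU \<Otimes>\<^sub>M measure_pmf PW)"
proof -
  have "(\<lambda>x. h (snd x) (fst x)) \<in> borel_measurable (codebook PU \<Otimes>\<^sub>M measure_pmf PW)"
  proof (rule measurable_compose_countable[where f="\<lambda>i x. h i (fst x)" and g=snd])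
    show "(\<lambda>x. h i (fst x)) \<in> borel_measurable (codebook PU \<Otimes>\<^sub>M measure_pmf PW)" for i
      by (rule measurable_compose[OF measurable_fst assms])
    have "snd \<in> codebook PU \<Otimes>\<^sub>M measure_pmf PW \<rightarrow>\<^sub>M measure_pmf PW" by (rule measurable_snd)
    then show "snd \<in> codebook PU \<Otimes>\<^sub>M measure_pmf PW \<rightarrow>\<^sub>M count_space UNIV" by simp
  qed
  then show ?thesis by (simp add: case_prod_beta')
qed

lemma nn_integral_codebook_pair:
  assumes "w \<noteq> w'"
  shows "(\<integral>\<^sup>+c. g (c w) * h (c w') \<partial>codebook PU) = (\<integral>\<^sup>+u. g u \<partial>PU w) * (\<integral>\<^sup>+u. h u \<partial>PU w')"
proof -
  interpret P: product_prob_space "\<lambda>w. measure_pmf (PU w)" UNIV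
    by (auto simp: product_prob_space_def product_prob_space_axioms_def product_sigma_finite_def
        prob_space_measure_pmf prob_space_imp_sigma_finite)
  let ?J = "{w, w'}" and ?PJ = "PiM {w, w'} (\<lambda>w. measure_pmf (PU w))"
  define F where "F i = (if i = w then g else h)" for i
  have distr: "distr (codebook PU) ?PJ (\<lambda>c. restrict c ?J) = ?PJ"
    unfolding codebook_def by (rule P.distr_PiM_restrict_finite) auto
  have restrict_meas: "(\<lambda>c. restrict c ?J) \<in> codebook PU \<rightarrow>\<^sub>M ?PJ"
    by (auto simp: codebook_def measurable_restrict_subset)
  have prod_meas: "(\<lambda>x. \<Prod>i\<in>?J. F i (x i)) \<in> borel_measurable ?PJ"
  proof (intro borel_measurable_prod_ennreal)
    fix i assume "i \<in> ?J"
    then have "(\<lambda>x. x i) \<in> ?PJ \<rightarrow>\<^sub>M measure_pmf (PU i)"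
      by (rule measurable_component_singleton)
    then show "(\<lambda>x. F i (x i)) \<in> borel_measurable ?PJ"
      by (rule measurable_compose) simp
  qed
  have "(\<integral>\<^sup>+c. g (c w) * h (c w') \<partial>codebook PU) = (\<integral>\<^sup>+c. (\<Prod>i\<in>?J. F i (c i)) \<partial>distr (codebook PU) ?PJ (\<lambda>c. restrict c ?J))"
    using assms prod_meas by (subst nn_integral_distr[OF restrict_meas]) (auto simp: distr F_def)
  also have "\<dots> = (\<Prod>i\<in>?J. integral\<^sup>N (PU i) (F i))"
    unfolding distr by (rule P.product_nn_integral_prod) auto
  also have "\<dots> = (\<integral>\<^sup>+u. g u \<partial>PU w) * (\<integral>\<^sup>+u. h u \<partial>PU w')"
    using assms by (simp add: F_def)
  finally show ?thesis .
qed

text \<open>For a weight function a, codebook_avg is the average of a w (c w) over the index law PW;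
  avg_mean is its expectation over the random codebook and diag_term bounds its variance.\<close>
definition codebook_avg :: "'w pmf \<Rightarrow> ('w \<Rightarrow> 'u \<Rightarrow> real) \<Rightarrow> ('w \<Rightarrow> 'u) \<Rightarrow> real" where
  "codebook_avg PW a c = measure_pmf.expectation PW (\<lambda>w. a w (c w))"

definition avg_mean :: "'w pmf \<Rightarrow> ('w \<Rightarrow> 'u pmf) \<Rightarrow> ('w \<Rightarrow> 'u \<Rightarrow> real) \<Rightarrow> real" where
  "avg_mean PW PU a = measure_pmf.expectation PW (\<lambda>w. measure_pmf.expectation (PU w) (a w))"

definition diag_term :: "'w pmf \<Rightarrow> ('w \<Rightarrow> 'u pmf) \<Rightarrow> ('w \<Rightarrow> 'u \<Rightarrow> real) \<Rightarrow> real" where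
  "diag_term PW PU a = avg_mean PW PU (\<lambda>w u. pmf PW w * (a w u)\<^sup>2)"

lemma diag_term_nonneg: "0 \<le> diag_term PW PU a"
  unfolding diag_term_def avg_mean_def by (intro integral_nonneg_AE AE_I2) auto

lemma avg_mean_bounds:
  assumes "\<And>w u. 0 \<le> a w u" "\<And>w u. a w u \<le> B"
  shows "0 \<le> avg_mean PW PU a" "avg_mean PW PU a \<le> B"
proof -
  have "0 \<le> measure_pmf.expectation (PU w) (a w)" "measure_pmf.expectation (PU w) (a w) \<le> B" for w
    by (rule pmf_expectation_bounds; use assms in auto)+
  then show "0 \<le> avg_mean PW PU a" "avg_mean PW PU a \<le> B"
    unfolding avg_mean_def by (rule pmf_expectation_bounds; auto)+
qed

lemma ennreal_avg_mean:
  assumes "\<And>w u. 0 \<le> a w u" "\<And>w u. a w u \<le> B"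
  shows "ennreal (avg_mean PW PU a) = (\<integral>\<^sup>+w. \<integral>\<^sup>+u. ennreal (a w u) \<partial>PU w \<partial>PW)"
  unfolding avg_mean_def
  by (subst measure_pmf.ennreal_expectation_bounded[where B=B],
      auto intro!: nn_integral_cong measure_pmf.ennreal_expectation_bounded pmf_expectation_bounds assms)

lemma avg_mean_mono:
  assumes "\<And>w u. 0 \<le> a w u" "\<And>w u. a w u \<le> b w u" "\<And>w u. b w u \<le> B"
  shows "avg_mean PW PU a \<le> avg_mean PW PU b"
proof -
  have b0: "0 \<le> b w u" for w u using assms(1,2) order_trans by blast
  have a1: "a w u \<le> B" for w u using assms(2,3) order_trans by blast
  have "ennreal (avg_mean PW PU a) \<le> ennreal (avg_mean PW PU b)"
    unfolding ennreal_avg_mean[where B=B, OF assms(1) a1] ennreal_avg_mean[where B=B, OF b0 assms(3)]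
    by (intro nn_integral_mono ennreal_leI assms(2))
  then show ?thesis
    using avg_mean_bounds(1)[where a=b and PW=PW and PU=PU, OF b0 assms(3)] by (simp add: ennreal_le_iff)
qed

lemma codebook_avg_bounds:
  assumes "\<And>w u. 0 \<le> a w u" "\<And>w u. a w u \<le> B"
  shows "0 \<le> codebook_avg PW a c" "codebook_avg PW a c \<le> B"
  unfolding codebook_avg_def by (rule pmf_expectation_bounds; use assms in auto)+

lemma ennreal_codebook_avg:
  assumes "\<And>w u. 0 \<le> a w u" "\<And>w u. a w u \<le> B"
  shows "ennreal (codebook_avg PW a c) = (\<integral>\<^sup>+w. ennreal (a w (c w)) \<partial>PW)"
  unfolding codebook_avg_def by (rule measure_pmf.ennreal_expectation_bounded) (use assms in auto)

lemma codebook_avg_measurable [measurable]: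
  fixes PW :: "'w::countable pmf" and PU :: "'w \<Rightarrow> 'u::countable pmf"
  shows "codebook_avg PW a \<in> borel_measurable (codebook PU)"
proof -
  have "(\<lambda>(c, w). a w (c w)) \<in> borel_measurable (codebook PU \<Otimes>\<^sub>M measure_pmf PW)"
    by (rule codebook_pmf_pair_measurable[where h="\<lambda>w c. a w (c w)"]) simp
  then show ?thesis unfolding codebook_avg_def[abs_def]
    by (rule sigma_finite_measure.borel_measurable_lebesgue_integral
        [OF prob_space_imp_sigma_finite[OF prob_space_measure_pmf]])
qed

lemma nn_integral_codebook_avg:
  fixes PW :: "'w::countable pmf" and PU :: "'w \<Rightarrow> 'u::countable pmf"
  assumes "\<And>w u. 0 \<le> a w u" "\<And>w u. a w u \<le> B"
  shows "(\<integral>\<^sup>+c. ennreal (codebook_avg PW a c) \<partial>codebook PU) = ennreal (avg_mean PW PU a)"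
proof -
  have "(\<integral>\<^sup>+c. ennreal (codebook_avg PW a c) \<partial>codebook PU)
      = (\<integral>\<^sup>+c. \<integral>\<^sup>+w. ennreal (a w (c w)) \<partial>PW \<partial>codebook PU)"
    by (simp add: ennreal_codebook_avg[OF assms])
  also have "\<dots> = (\<integral>\<^sup>+w. \<integral>\<^sup>+c. ennreal (a w (c w)) \<partial>codebook PU \<partial>PW)"
    by (rule nn_integral_pmf_swap) simp
  also have "\<dots> = (\<integral>\<^sup>+w. \<integral>\<^sup>+u. ennreal (a w u) \<partial>PU w \<partial>PW)"
    by (intro nn_integral_cong nn_integral_codebook_component)
  also have "\<dots> = ennreal (avg_mean PW PU a)"
    by (rule ennreal_avg_mean[OF assms, symmetric])
  finally show ?thesis .
qed

lemma expectation_codebook_avg: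
  fixes PW :: "'w::countable pmf" and PU :: "'w \<Rightarrow> 'u::countable pmf"
  assumes "\<And>w u. 0 \<le> a w u" "\<And>w u. a w u \<le> B"
  shows "integral\<^sup>L (codebook PU) (codebook_avg PW a) = avg_mean PW PU a"
proof -
  interpret prob_space "codebook PU" by (rule prob_space_codebook)
  have "ennreal (expectation (codebook_avg PW a)) = ennreal (avg_mean PW PU a)"
    using assms codebook_avg_bounds[OF assms]
    by (subst ennreal_expectation_bounded[where B=B]) (auto simp: nn_integral_codebook_avg[OF assms])
  moreover have "0 \<le> expectation (codebook_avg PW a)"
    by (rule integral_nonneg_AE) (simp add: codebook_avg_bounds[OF assms])
  ultimately show ?thesis
    using avg_mean_bounds[OF assms] by (subst (asm) ennreal_inj) auto
qed

text \<open>Second moments of codeword functions: distinct codewords are independent, equal ones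
  give a diagonal term.\<close>
lemma nn_integral_codebook_pair_moment:
  fixes b :: "'w \<Rightarrow> 'u \<Rightarrow> ennreal"
  shows "(\<integral>\<^sup>+c. b w (c w) * b w' (c w') \<partial>codebook PU)
    \<le> (\<integral>\<^sup>+u. b w u \<partial>PU w) * (\<integral>\<^sup>+u. b w' u \<partial>PU w') + (\<integral>\<^sup>+u. (b w u)\<^sup>2 \<partial>PU w) * indicator {w} w'"
proof (cases "w = w'")
  case True
  have "(\<integral>\<^sup>+c. b w (c w) * b w' (c w') \<partial>codebook PU) = (\<integral>\<^sup>+u. (b w u)\<^sup>2 \<partial>PU w)"
    using True nn_integral_codebook_component[where g="\<lambda>u. (b w u)\<^sup>2" and PU=PU and w=w] by (simp add: power2_eq_square)
  then show ?thesis using True by (simp add: add_increasing)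
next
  case False
  then show ?thesis by (simp add: nn_integral_codebook_pair)
qed

lemma pmf_weighted_square_bounds:
  fixes x B :: real
  assumes "0 \<le> x" "x \<le> B"
  shows "0 \<le> pmf p y * x\<^sup>2" "pmf p y * x\<^sup>2 \<le> B\<^sup>2"
  using assms by (auto intro: order_trans[OF mult_left_le_one_le power_mono] pmf_le_1)

lemma ennreal_diag_term:
  fixes PW :: "'w pmf" and PU :: "'w \<Rightarrow> 'u pmf"
  assumes bnd: "\<And>w u. 0 \<le> a w u" "\<And>w u. a w u \<le> B"
  shows "(\<integral>\<^sup>+w. (\<integral>\<^sup>+u. (ennreal (a w u))\<^sup>2 \<partial>PU w) * ennreal (pmf PW w) \<partial>PW) = ennreal (diag_term PW PU a)"
proof -
  have "(\<integral>\<^sup>+w. (\<integral>\<^sup>+u. (ennreal (a w u))\<^sup>2 \<partial>PU w) * ennreal (pmf PW w) \<partial>PW)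
      = (\<integral>\<^sup>+w. \<integral>\<^sup>+u. ennreal (pmf PW w * (a w u)\<^sup>2) \<partial>PU w \<partial>PW)"
    using bnd by (simp add: nn_integral_cmult ennreal_mult'' ennreal_power mult.commute)
  also have "\<dots> = ennreal (diag_term PW PU a)"
    unfolding diag_term_def
    by (rule ennreal_avg_mean[where B="B\<^sup>2", symmetric]) (rule pmf_weighted_square_bounds; use bnd in auto)+
  finally show ?thesis .
qed

lemma codebook_avg_second_moment:
  fixes PW :: "'w::countable pmf" and PU :: "'w \<Rightarrow> 'u::countable pmf"
  assumes bnd: "\<And>w u. 0 \<le> a w u" "\<And>w u. a w u \<le> B"
  shows "integral\<^sup>L (codebook PU) (\<lambda>c. (codebook_avg PW a c)\<^sup>2) \<le> (avg_mean PW PU a)\<^sup>2 + diag_term PW PU a"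
proof -
  interpret prob_space "codebook PU" by (rule prob_space_codebook)
  define E where "E w = (\<integral>\<^sup>+u. ennreal (a w u) \<partial>PU w)" for w
  define E2 where "E2 w = (\<integral>\<^sup>+u. (ennreal (a w u))\<^sup>2 \<partial>PU w)" for w
  have X: "0 \<le> codebook_avg PW a c" "codebook_avg PW a c \<le> B" for c
    by (rule codebook_avg_bounds[OF bnd])+
  have B0: "0 \<le> B" using bnd order_trans by blast
  have "ennreal (expectation (\<lambda>c. (codebook_avg PW a c)\<^sup>2))
      = (\<integral>\<^sup>+c. ennreal (codebook_avg PW a c) * ennreal (codebook_avg PW a c) \<partial>codebook PU)"
    using X by (subst ennreal_expectation_bounded[where B="B\<^sup>2"])
      (auto simp: ennreal_mult[symmetric] power2_eq_square intro: mult_mono[OF X(2) X(2) B0 X(1)])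
  also have "\<dots> = (\<integral>\<^sup>+c. \<integral>\<^sup>+w. \<integral>\<^sup>+w'. ennreal (a w (c w)) * ennreal (a w' (c w')) \<partial>PW \<partial>PW \<partial>codebook PU)"
    by (simp add: ennreal_codebook_avg[OF bnd] nn_integral_multc nn_integral_cmult)
  also have "\<dots> = (\<integral>\<^sup>+w. \<integral>\<^sup>+w'. \<integral>\<^sup>+c. ennreal (a w (c w)) * ennreal (a w' (c w')) \<partial>codebook PU \<partial>PW \<partial>PW)"
  proof (subst nn_integral_pmf_swap)
    show "(\<lambda>c. \<integral>\<^sup>+w'. ennreal (a w (c w)) * ennreal (a w' (c w')) \<partial>PW) \<in> borel_measurable (codebook PU)" for w
      by (rule sigma_finite_measure.borel_measurable_nn_integral
          [OF prob_space_imp_sigma_finite[OF prob_space_measure_pmf]],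
          rule codebook_pmf_pair_measurable) simp
  qed (intro nn_integral_cong nn_integral_pmf_swap codebook_fun2_measurable)
  also have "\<dots> \<le> (\<integral>\<^sup>+w. \<integral>\<^sup>+w'. E w * E w' + E2 w * indicator {w} w' \<partial>PW \<partial>PW)"
    unfolding E_def E2_def by (intro nn_integral_mono nn_integral_codebook_pair_moment)
  also have "\<dots> = (\<integral>\<^sup>+w. E w \<partial>PW) * (\<integral>\<^sup>+w. E w \<partial>PW) + (\<integral>\<^sup>+w. E2 w * ennreal (pmf PW w) \<partial>PW)"
    by (simp add: nn_integral_add nn_integral_multc nn_integral_cmult emeasure_pmf_single)
  also have "\<dots> = ennreal ((avg_mean PW PU a)\<^sup>2 + diag_term PW PU a)"
  proof -
    have diag: "(\<integral>\<^sup>+w. E2 w * ennreal (pmf PW w) \<partial>PW) = ennreal (diag_term PW PU a)"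
      unfolding E2_def by (rule ennreal_diag_term[OF bnd])
    have mean: "(\<integral>\<^sup>+w. E w \<partial>PW) = ennreal (avg_mean PW PU a)"
      unfolding E_def by (rule ennreal_avg_mean[OF bnd, symmetric])
    have "0 \<le> avg_mean PW PU a" by (rule avg_mean_bounds[OF bnd])
    then show ?thesis
      using diag mean diag_term_nonneg[of PW PU a]
      by (simp add: ennreal_mult[symmetric] ennreal_plus[symmetric] power2_eq_square del: ennreal_plus)
  qed
  finally show ?thesis
    using diag_term_nonneg[of PW PU a] by (subst (asm) ennreal_le_iff) auto
qed

lemma codebook_avg_deviation:
  fixes PW :: "'w::countable pmf" and PU :: "'w \<Rightarrow> 'u::countable pmf"
  assumes bnd: "\<And>w u. 0 \<le> a w u" "\<And>w u. a w u \<le> B"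
  shows "integral\<^sup>L (codebook PU) (\<lambda>c. \<bar>codebook_avg PW a c - avg_mean PW PU a\<bar>) \<le> sqrt (diag_term PW PU a)"
proof -
  interpret prob_space "codebook PU" by (rule prob_space_codebook)
  let ?X = "codebook_avg PW a"
  have X: "0 \<le> ?X c" "?X c \<le> B" for c by (rule codebook_avg_bounds[OF bnd])+
  have int_X: "integrable (codebook PU) ?X"
    by (rule integrable_const_bound[where B=B]) (use X in auto)
  have int_X2: "integrable (codebook PU) (\<lambda>c. (?X c)\<^sup>2)"
    by (rule integrable_const_bound[where B="B\<^sup>2"]) (use X in \<open>auto intro: power_mono\<close>)
  have mean: "expectation ?X = avg_mean PW PU a" by (rule expectation_codebook_avg[OF bnd])
  have "variance ?X = expectation (\<lambda>c. (?X c)\<^sup>2) - (expectation ?X)\<^sup>2"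
    by (rule variance_eq) (use int_X int_X2 in auto)
  also have "\<dots> \<le> diag_term PW PU a"
    using codebook_avg_second_moment[where a=a and PW=PW and PU=PU, OF bnd] mean by simp
  finally have "variance ?X \<le> diag_term PW PU a" .
  then show ?thesis
    using expectation_abs_deviation_le[OF int_X int_X2] mean
    by (simp add: order_trans[OF _ real_sqrt_le_mono])
qed

lemma codebook_avg_add:
  assumes "\<And>w u. 0 \<le> a w u" "\<And>w u. a w u \<le> B" "\<And>w u. 0 \<le> b w u" "\<And>w u. b w u \<le> B"
  shows "codebook_avg PW (\<lambda>w u. a w u + b w u) c = codebook_avg PW a c + codebook_avg PW b c"
  unfolding codebook_avg_def by (rule pmf_expectation_add) (use assms in auto)

lemma avg_mean_add:
  assumes "\<And>w u. 0 \<le> a w u" "\<And>w u. a w u \<le> B" "\<And>w u. 0 \<le> b w u" "\<And>w u. b w u \<le> B"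
  shows "avg_mean PW PU (\<lambda>w u. a w u + b w u) = avg_mean PW PU a + avg_mean PW PU b"
proof -
  have inner: "measure_pmf.expectation (PU w) (\<lambda>u. a w u + b w u)
      = measure_pmf.expectation (PU w) (a w) + measure_pmf.expectation (PU w) (b w)" for w
    by (rule pmf_expectation_add) (use assms in auto)
  have "0 \<le> measure_pmf.expectation (PU w) (f w)" "measure_pmf.expectation (PU w) (f w) \<le> B"
    if "\<And>w u. 0 \<le> f w u" "\<And>w u. f w u \<le> B" for f w
    by (rule pmf_expectation_bounds; use that in auto)+
  then show ?thesis
    unfolding avg_mean_def inner by (intro pmf_expectation_add) (use assms in auto)
qed

definition chan_part :: "('w \<times> 'u \<times> 'v) set \<Rightarrow> ('w \<Rightarrow> 'u \<Rightarrow> 'v pmf) \<Rightarrow> 'v \<Rightarrow> 'w \<Rightarrow> 'u \<Rightarrow> real" where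
  "chan_part B PV v w u = pmf (PV w u) v * indicator B (w, u, v)"

lemma chan_part_bounds: "0 \<le> chan_part B PV v w u" "chan_part B PV v w u \<le> 1"
  unfolding chan_part_def by (auto simp: indicator_def pmf_le_1)

lemma chan_part_le_pmf: "chan_part B PV v w u \<le> pmf (PV w u) v"
  unfolding chan_part_def by (auto simp: indicator_def)

lemma chan_part_split: "pmf (PV w u) v = chan_part B PV v w u + chan_part (- B) PV v w u"
  unfolding chan_part_def by (auto simp: indicator_def)

lemma codebook_avg_chan_part_bounds:
  "0 \<le> codebook_avg PW (chan_part B PV v) c" "codebook_avg PW (chan_part B PV v) c \<le> 1"
  by (rule codebook_avg_bounds; rule chan_part_bounds)+

lemma avg_mean_chan_part_bounds:
  "0 \<le> avg_mean PW PU (chan_part B PV v)" "avg_mean PW PU (chan_part B PV v) \<le> 1"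
  by (rule avg_mean_bounds; rule chan_part_bounds)+

lemma induced_PV_split:
  "induced_PV PW PV c v = codebook_avg PW (chan_part B PV v) c + codebook_avg PW (chan_part (- B) PV v) c"
proof -
  have "induced_PV PW PV c v = codebook_avg PW (\<lambda>w u. chan_part B PV v w u + chan_part (- B) PV v w u) c"
    unfolding induced_PV_def codebook_avg_def by (simp flip: chan_part_split)
  also have "\<dots> = codebook_avg PW (chan_part B PV v) c + codebook_avg PW (chan_part (- B) PV v) c"
    by (rule codebook_avg_add) (rule chan_part_bounds)+
  finally show ?thesis .
qed

lemma pmf_marg_V: "pmf (marg_V PW PU PV) v = avg_mean PW PU (\<lambda>w u. pmf (PV w u) v)"
proof -
  have "marg_V PW PU PV = bind_pmf PW (\<lambda>w. bind_pmf (PU w) (PV w))"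
    unfolding marg_V_def joint_pmf_def by (simp add: map_bind_pmf map_pmf_comp)
  then show ?thesis unfolding avg_mean_def by (simp add: pmf_bind)
qed

lemma marg_V_split:
  "pmf (marg_V PW PU PV) v = avg_mean PW PU (chan_part B PV v) + avg_mean PW PU (chan_part (- B) PV v)"
proof -
  have "pmf (marg_V PW PU PV) v = avg_mean PW PU (\<lambda>w u. chan_part B PV v w u + chan_part (- B) PV v w u)"
    unfolding pmf_marg_V by (simp flip: chan_part_split)
  also have "\<dots> = avg_mean PW PU (chan_part B PV v) + avg_mean PW PU (chan_part (- B) PV v)"
    by (rule avg_mean_add) (rule chan_part_bounds)+
  finally show ?thesis .
qed

lemma nn_integral_joint_pmf:
  "(\<integral>\<^sup>+x. f x \<partial>joint_pmf PW PU PV) = (\<integral>\<^sup>+w. \<integral>\<^sup>+u. \<integral>\<^sup>+v. f (w, u, v) \<partial>PV w u \<partial>PU w \<partial>PW)"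
  unfolding joint_pmf_def by simp

lemma nn_integral_avg_mean_chan_part:
  fixes PV :: "'w \<Rightarrow> 'u \<Rightarrow> 'v::countable pmf"
  shows "(\<integral>\<^sup>+v. ennreal (avg_mean PW PU (chan_part B PV v)) \<partial>count_space UNIV)
    = emeasure (measure_pmf (joint_pmf PW PU PV)) B"
proof -
  have "(\<integral>\<^sup>+v. ennreal (avg_mean PW PU (chan_part B PV v)) \<partial>count_space UNIV)
      = (\<integral>\<^sup>+v. \<integral>\<^sup>+w. \<integral>\<^sup>+u. ennreal (chan_part B PV v w u) \<partial>PU w \<partial>PW \<partial>count_space UNIV)"
    by (simp add: ennreal_avg_mean[where B=1] chan_part_bounds)
  also have "\<dots> = (\<integral>\<^sup>+w. \<integral>\<^sup>+u. \<integral>\<^sup>+v. ennreal (chan_part B PV v w u) \<partial>count_space UNIV \<partial>PU w \<partial>PW)"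
    by (subst nn_integral_count_space_nn_integral[symmetric])
      (auto intro!: nn_integral_cong nn_integral_count_space_nn_integral[symmetric])
  also have "\<dots> = (\<integral>\<^sup>+w. \<integral>\<^sup>+u. \<integral>\<^sup>+v. indicator B (w, u, v) \<partial>PV w u \<partial>PU w \<partial>PW)"
    by (intro nn_integral_cong) (simp add: nn_integral_measure_pmf chan_part_def ennreal_mult' ennreal_indicator)
  also have "\<dots> = (\<integral>\<^sup>+x. indicator B x \<partial>joint_pmf PW PU PV)"
    by (simp add: nn_integral_joint_pmf)
  finally show ?thesis by simp
qed

definition tilted_density :: "'w pmf \<Rightarrow> ('w \<Rightarrow> 'u pmf) \<Rightarrow> ('w \<Rightarrow> 'u \<Rightarrow> 'v pmf) \<Rightarrow> real \<Rightarrow> 'w \<times> 'u \<times> 'v \<Rightarrow> real" where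
  "tilted_density PW PU PV \<tau> = (\<lambda>(w, u, v). 2 powr (idens PW PU PV w u v - selfinfo PW w)
                                    * indicator (A_set PW PU PV \<tau>) (w, u, v))"

definition cond_moment :: "'w pmf \<Rightarrow> ('w \<Rightarrow> 'u pmf) \<Rightarrow> ('w \<Rightarrow> 'u \<Rightarrow> 'v pmf) \<Rightarrow> real \<Rightarrow> 'v \<Rightarrow> real" where
  "cond_moment PW PU PV \<tau> v =
     measure_pmf.expectation (cond_pmf (joint_pmf PW PU PV) {x. snd (snd x) = v}) (tilted_density PW PU PV \<tau>)"

lemma delta_eq:
  "delta PW PU PV \<tau> = 1/2 * measure_pmf.expectation (marg_V PW PU PV) (\<lambda>v. sqrt (cond_moment PW PU PV \<tau> v))"
  unfolding delta_def cond_moment_def tilted_density_def by simp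

lemma tilted_density_bounds:
  "0 \<le> tilted_density PW PU PV \<tau> x" "tilted_density PW PU PV \<tau> x \<le> 2 powr \<tau>"
  by (cases x; auto simp: tilted_density_def A_set_def indicator_def)+

lemma cond_moment_bounds:
  "0 \<le> cond_moment PW PU PV \<tau> v" "cond_moment PW PU PV \<tau> v \<le> 2 powr \<tau>"
  unfolding cond_moment_def by (rule pmf_expectation_bounds; rule tilted_density_bounds)+

lemma delta_nonneg: "0 \<le> delta PW PU PV \<tau>"
  unfolding delta_eq by (simp add: integral_nonneg_AE cond_moment_bounds)

text \<open>Second half of the theorem, since the conditional moment is at most 2 powr tau.\<close>
lemma delta_le: "delta PW PU PV \<tau> \<le> 1/2 * 2 powr (\<tau>/2)"
proof -
  have "sqrt (cond_moment PW PU PV \<tau> v) \<le> 2 powr (\<tau>/2)" for v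
    using cond_moment_bounds[of PW PU PV \<tau> v] by (simp add: powr_half_sqrt_powr)
  then have "measure_pmf.expectation (marg_V PW PU PV) (\<lambda>v. sqrt (cond_moment PW PU PV \<tau> v)) \<le> 2 powr (\<tau>/2)"
    by (intro pmf_expectation_bounds(2)) (auto simp: cond_moment_bounds)
  then show ?thesis unfolding delta_eq by simp
qed

text \<open>Where the codeword index has positive probability, the tilted density is the ratio
  linking the diagonal term to the conditional moment.\<close>
lemma tilted_density_identity:
  assumes "0 < pmf PW w" "0 < pmf (marg_V PW PU PV) v"
  shows "pmf (marg_V PW PU PV) v * tilted_density PW PU PV \<tau> (w, u, v) * pmf (PV w u) v
    = pmf PW w * (chan_part (A_set PW PU PV \<tau>) PV v w u)\<^sup>2"
proof (cases "pmf (PV w u) v = 0")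
  case True
  then show ?thesis by (simp add: chan_part_def)
next
  case False
  then have "0 < pmf (PV w u) v" by (simp add: order_less_le)
  then have "2 powr (idens PW PU PV w u v - selfinfo PW w) = pmf (PV w u) v * pmf PW w / pmf (marg_V PW PU PV) v"
    using assms unfolding idens_def selfinfo_def by (simp add: powr_diff)
  then show ?thesis
    using assms by (simp add: tilted_density_def chan_part_def indicator_def power2_eq_square)
qed

lemma cond_moment_scaled:
  fixes PW :: "'w pmf" and PU :: "'w \<Rightarrow> 'u pmf" and PV :: "'w \<Rightarrow> 'u \<Rightarrow> 'v pmf"
  assumes Q: "0 < pmf (marg_V PW PU PV) v"
  shows "ennreal (pmf (marg_V PW PU PV) v * cond_moment PW PU PV \<tau> v)
    = (\<integral>\<^sup>+w. \<integral>\<^sup>+u. ennreal (tilted_density PW PU PV \<tau> (w, u, v) * pmf (PV w u) v) \<partial>PU w \<partial>PW)"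
proof -
  define J where "J = joint_pmf PW PU PV"
  define s where "s = {x::'w \<times> 'u \<times> 'v. snd (snd x) = v}"
  define g where "g = tilted_density PW PU PV \<tau>"
  define T where "T = (\<integral>\<^sup>+w. \<integral>\<^sup>+u. ennreal (g (w, u, v) * pmf (PV w u) v) \<partial>PU w \<partial>PW)"
  have "pmf (marg_V PW PU PV) v = measure (measure_pmf J) ((\<lambda>(w, u, v). v) -` {v})"
    unfolding marg_V_def J_def by (simp add: pmf_map)
  also have "(\<lambda>(w, u, v). v) -` {v} = s" unfolding s_def by auto
  finally have mJ: "measure (measure_pmf J) s = pmf (marg_V PW PU PV) v" ..
  then have ne: "set_pmf J \<inter> s \<noteq> {}"
    using Q measure_pmf_zero_iff[of J s] by auto
  have "ennreal (cond_moment PW PU PV \<tau> v) = (\<integral>\<^sup>+x. ennreal (g x) \<partial>cond_pmf J s)"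
    unfolding cond_moment_def J_def[symmetric] s_def[symmetric] g_def
    by (rule measure_pmf.ennreal_expectation_bounded[where B="2 powr \<tau>"]) (simp_all add: tilted_density_bounds)
  also have "\<dots> = (\<integral>\<^sup>+x. ennreal (g x) \<partial>uniform_measure (measure_pmf J) s)"
    by (simp add: cond_pmf.rep_eq[OF ne])
  also have "\<dots> = (\<integral>\<^sup>+x. ennreal (g x) * indicator s x \<partial>J) / emeasure (measure_pmf J) s"
    by (rule nn_integral_uniform_measure) auto
  also have "(\<integral>\<^sup>+x. ennreal (g x) * indicator s x \<partial>J) = T"
    unfolding T_def J_def nn_integral_joint_pmf
  proof (intro nn_integral_cong)
    fix w u
    have "(\<integral>\<^sup>+v'. ennreal (g (w, u, v')) * indicator s (w, u, v') \<partial>PV w u)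
        = (\<integral>\<^sup>+v'. ennreal (g (w, u, v)) * indicator {v} v' \<partial>PV w u)"
      by (intro nn_integral_cong) (simp add: s_def indicator_def)
    then show "(\<integral>\<^sup>+v'. ennreal (g (w, u, v')) * indicator s (w, u, v') \<partial>PV w u)
        = ennreal (g (w, u, v) * pmf (PV w u) v)"
      by (simp add: emeasure_pmf_single ennreal_mult g_def tilted_density_bounds)
  qed
  finally have "ennreal (cond_moment PW PU PV \<tau> v) = T / ennreal (pmf (marg_V PW PU PV) v)"
    using mJ by (simp add: measure_pmf.emeasure_eq_measure)
  then have "ennreal (pmf (marg_V PW PU PV) v * cond_moment PW PU PV \<tau> v)
      = T * ennreal (pmf (marg_V PW PU PV) v) / ennreal (pmf (marg_V PW PU PV) v)"
    using cond_moment_bounds(1)[of PW PU PV \<tau> v]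
    by (simp add: ennreal_mult ennreal_times_divide mult.commute)
  also have "\<dots> = T" using Q by (intro ennreal_mult_divide_eq) auto
  finally show ?thesis unfolding T_def g_def .
qed

text \<open>The diagonal term of any channel part is at most the output probability; this settles
  outputs of probability zero.\<close>
lemma diag_term_chan_part_le: "diag_term PW PU (chan_part B PV v) \<le> pmf (marg_V PW PU PV) v"
proof -
  have "pmf PW w * (chan_part B PV v w u)\<^sup>2 \<le> pmf (PV w u) v" for w u
  proof -
    have "pmf PW w * (chan_part B PV v w u)\<^sup>2 \<le> (chan_part B PV v w u)\<^sup>2"
      by (intro mult_left_le_one_le) (simp_all add: pmf_le_1)
    also have "\<dots> \<le> chan_part B PV v w u"
      unfolding power2_eq_square by (intro mult_left_le_one_le chan_part_bounds)
    also have "\<dots> \<le> pmf (PV w u) v" by (rule chan_part_le_pmf)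
    finally show ?thesis .
  qed
  then show ?thesis
    unfolding diag_term_def pmf_marg_V by (intro avg_mean_mono[where B=1]) (auto simp: pmf_le_1)
qed

lemma diag_term_chan_part:
  "diag_term PW PU (chan_part (A_set PW PU PV \<tau>) PV v)
    = (pmf (marg_V PW PU PV) v)\<^sup>2 * cond_moment PW PU PV \<tau> v"
proof (cases "pmf (marg_V PW PU PV) v = 0")
  case True
  then show ?thesis
    using diag_term_chan_part_le[of PW PU "A_set PW PU PV \<tau>" PV v]
      diag_term_nonneg[of PW PU "chan_part (A_set PW PU PV \<tau>) PV v"] by simp
next
  case False
  define Q where "Q = pmf (marg_V PW PU PV) v"
  have Q: "0 < Q" using False unfolding Q_def by (simp add: order_less_le)
  have "ennreal (diag_term PW PU (chan_part (A_set PW PU PV \<tau>) PV v))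
      = (\<integral>\<^sup>+w. \<integral>\<^sup>+u. ennreal (pmf PW w * (chan_part (A_set PW PU PV \<tau>) PV v w u)\<^sup>2) \<partial>PU w \<partial>PW)"
    unfolding diag_term_def
    by (rule ennreal_avg_mean[where B=1]) (use pmf_weighted_square_bounds[OF chan_part_bounds] in auto)
  also have "\<dots> = (\<integral>\<^sup>+w. \<integral>\<^sup>+u. ennreal Q * ennreal (tilted_density PW PU PV \<tau> (w, u, v) * pmf (PV w u) v) \<partial>PU w \<partial>PW)"
  proof (intro nn_integral_cong_AE)
    have "ennreal (pmf PW w * (chan_part (A_set PW PU PV \<tau>) PV v w u)\<^sup>2)
        = ennreal Q * ennreal (tilted_density PW PU PV \<tau> (w, u, v) * pmf (PV w u) v)"
      if "w \<in> set_pmf PW" for w u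
    proof -
      have "pmf PW w * (chan_part (A_set PW PU PV \<tau>) PV v w u)\<^sup>2
          = Q * (tilted_density PW PU PV \<tau> (w, u, v) * pmf (PV w u) v)"
        using tilted_density_identity[OF pmf_positive[OF that] Q[unfolded Q_def]] by (simp add: Q_def mult.assoc)
      then show ?thesis
        using Q tilted_density_bounds(1)[of PW PU PV \<tau> "(w, u, v)"] by (simp add: ennreal_mult)
    qed
    then show "AE w in PW. (\<integral>\<^sup>+u. ennreal (pmf PW w * (chan_part (A_set PW PU PV \<tau>) PV v w u)\<^sup>2) \<partial>PU w)
      = (\<integral>\<^sup>+u. ennreal Q * ennreal (tilted_density PW PU PV \<tau> (w, u, v) * pmf (PV w u) v) \<partial>PU w)"
      by (auto simp: AE_measure_pmf_iff intro!: nn_integral_cong)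
  qed
  also have "\<dots> = ennreal Q * ennreal (Q * cond_moment PW PU PV \<tau> v)"
    unfolding Q_def cond_moment_scaled[OF Q[unfolded Q_def]] by (simp add: nn_integral_cmult)
  also have "\<dots> = ennreal (Q\<^sup>2 * cond_moment PW PU PV \<tau> v)"
    using Q cond_moment_bounds(1)[of PW PU PV \<tau> v] by (simp add: ennreal_mult power2_eq_square mult.assoc)
  finally show ?thesis
    using Q cond_moment_bounds(1)[of PW PU PV \<tau> v] diag_term_nonneg unfolding Q_def
    by (subst (asm) ennreal_inj) auto
qed

definition split_bound :: "'w pmf \<Rightarrow> ('w \<Rightarrow> 'u pmf) \<Rightarrow> ('w \<Rightarrow> 'u \<Rightarrow> 'v pmf) \<Rightarrow> ('w \<times> 'u \<times> 'v) set
    \<Rightarrow> 'v \<Rightarrow> ('w \<Rightarrow> 'u) \<Rightarrow> real" where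
  "split_bound PW PU PV B v c =
     \<bar>codebook_avg PW (chan_part B PV v) c - avg_mean PW PU (chan_part B PV v)\<bar>
     + codebook_avg PW (chan_part (- B) PV v) c + avg_mean PW PU (chan_part (- B) PV v)"

lemma split_bound_bounds: "0 \<le> split_bound PW PU PV B v c" "split_bound PW PU PV B v c \<le> 3"
  using codebook_avg_chan_part_bounds[of PW B PV v c] codebook_avg_chan_part_bounds[of PW "- B" PV v c]
    avg_mean_chan_part_bounds[of PW PU B PV v] avg_mean_chan_part_bounds[of PW PU "- B" PV v]
  unfolding split_bound_def by auto

lemma abs_induced_PV_le_split_bound:
  "\<bar>induced_PV PW PV c v - pmf (marg_V PW PU PV) v\<bar> \<le> split_bound PW PU PV B v c"
  using induced_PV_split[of PW PV c v B] marg_V_split[of PW PU PV v B]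
    codebook_avg_chan_part_bounds(1)[of PW "- B" PV v c] avg_mean_chan_part_bounds(1)[of PW PU "- B" PV v]
  unfolding split_bound_def by linarith

lemma tv_dist_le_split_bound:
  fixes PV :: "'w \<Rightarrow> 'u \<Rightarrow> 'v::countable pmf"
  shows "ennreal (tv_dist (induced_PV PW PV c) (pmf (marg_V PW PU PV)))
    \<le> (\<integral>\<^sup>+v. ennreal (split_bound PW PU PV B v c / 2) \<partial>count_space UNIV)"
proof -
  let ?d = "\<lambda>v. \<bar>induced_PV PW PV c v - pmf (marg_V PW PU PV) v\<bar>"
  have "ennreal (\<Sum>\<^sub>\<infinity>v. ?d v) \<le> (\<integral>\<^sup>+v. ennreal (?d v) \<partial>count_space UNIV)"
    by (rule ennreal_infsum_le_nn_integral) simp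
  also have "\<dots> \<le> (\<integral>\<^sup>+v. ennreal (split_bound PW PU PV B v c) \<partial>count_space UNIV)"
    by (intro nn_integral_mono ennreal_leI abs_induced_PV_le_split_bound)
  finally have "ennreal (\<Sum>\<^sub>\<infinity>v. ?d v) / 2
      \<le> (\<integral>\<^sup>+v. ennreal (split_bound PW PU PV B v c) \<partial>count_space UNIV) / 2"
    by (rule divide_right_mono_ennreal)
  moreover have "0 \<le> (\<Sum>\<^sub>\<infinity>v. ?d v)" by (rule infsum_nonneg) simp
  moreover have "ennreal (split_bound PW PU PV B v c) / 2 = ennreal (split_bound PW PU PV B v c / 2)" for v
    by (rule ennreal_divide_numeral) (rule split_bound_bounds)
  ultimately show ?thesis
    unfolding tv_dist_def by (simp add: nn_integral_divide[symmetric] ennreal_divide_numeral)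
qed

lemma nn_integral_split_bound:
  fixes PW :: "'w::countable pmf" and PU :: "'w \<Rightarrow> 'u::countable pmf"
  shows "(\<integral>\<^sup>+c. ennreal (split_bound PW PU PV B v c / 2) \<partial>codebook PU)
    \<le> ennreal (sqrt (diag_term PW PU (chan_part B PV v)) / 2 + avg_mean PW PU (chan_part (- B) PV v))"
proof -
  interpret prob_space "codebook PU" by (rule prob_space_codebook)
  let ?X = "codebook_avg PW (chan_part B PV v)" and ?q = "avg_mean PW PU (chan_part B PV v)"
  let ?Y = "codebook_avg PW (chan_part (- B) PV v)" and ?r = "avg_mean PW PU (chan_part (- B) PV v)"
  have int: "integrable (codebook PU) (codebook_avg PW (chan_part B' PV v))" for B'
    by (rule integrable_const_bound[where B=1]) (simp_all add: codebook_avg_chan_part_bounds)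
  have "expectation (\<lambda>c. split_bound PW PU PV B v c / 2)
      = (expectation (\<lambda>c. \<bar>?X c - ?q\<bar>) + expectation ?Y + ?r) / 2"
    unfolding split_bound_def using int[of B] int[of "- B"] by (simp add: prob_space)
  also have "\<dots> \<le> (sqrt (diag_term PW PU (chan_part B PV v)) + ?r + ?r) / 2"
    using codebook_avg_deviation[where a="chan_part B PV v" and PW=PW and PU=PU, OF chan_part_bounds]
      expectation_codebook_avg[where a="chan_part (- B) PV v" and PW=PW and PU=PU, OF chan_part_bounds]
    by simp
  finally have "expectation (\<lambda>c. split_bound PW PU PV B v c / 2)
      \<le> sqrt (diag_term PW PU (chan_part B PV v)) / 2 + ?r" by simp
  moreover have "(\<lambda>c. split_bound PW PU PV B v c / 2) \<in> borel_measurable (codebook PU)"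
    unfolding split_bound_def by measurable
  moreover have "0 \<le> split_bound PW PU PV B v c / 2" "split_bound PW PU PV B v c / 2 \<le> 3" for c
    using split_bound_bounds[of PW PU PV B v c] by auto
  ultimately show ?thesis
    by (subst ennreal_expectation_bounded[where B=3, symmetric]) (auto intro: ennreal_leI)
qed

lemma nn_integral_output_bound:
  fixes PW :: "'w pmf" and PU :: "'w \<Rightarrow> 'u pmf" and PV :: "'w \<Rightarrow> 'u \<Rightarrow> 'v::countable pmf" and \<tau> :: real
  defines "A \<equiv> A_set PW PU PV \<tau>"
  shows "(\<integral>\<^sup>+v. ennreal (sqrt (diag_term PW PU (chan_part A PV v)) / 2 + avg_mean PW PU (chan_part (- A) PV v))
      \<partial>count_space UNIV)
    = ennreal (measure_pmf.prob (joint_pmf PW PU PV) (- A) + delta PW PU PV \<tau>)"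
proof -
  let ?Q = "marg_V PW PU PV" and ?Y = "cond_moment PW PU PV \<tau>"
  have Y: "0 \<le> ?Y v" "?Y v \<le> 2 powr \<tau>" for v by (rule cond_moment_bounds)+
  have r: "0 \<le> avg_mean PW PU (chan_part (- A) PV v)" for v
    by (rule avg_mean_chan_part_bounds)
  have "ennreal (sqrt (diag_term PW PU (chan_part A PV v)) / 2 + avg_mean PW PU (chan_part (- A) PV v))
      = ennreal (pmf ?Q v) * ennreal (sqrt (?Y v) / 2) + ennreal (avg_mean PW PU (chan_part (- A) PV v))" for v
  proof -
    have "sqrt (diag_term PW PU (chan_part A PV v)) / 2 = pmf ?Q v * (sqrt (?Y v) / 2)"
      unfolding A_def diag_term_chan_part by (simp add: real_sqrt_mult)
    then show ?thesis
      using Y[of v] r[of v] by (simp add: ennreal_plus[symmetric] ennreal_mult[symmetric] del: ennreal_plus)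
  qed
  then have "(\<integral>\<^sup>+v. ennreal (sqrt (diag_term PW PU (chan_part A PV v)) / 2 + avg_mean PW PU (chan_part (- A) PV v))
      \<partial>count_space UNIV)
    = (\<integral>\<^sup>+v. ennreal (sqrt (?Y v) / 2) \<partial>?Q)
      + (\<integral>\<^sup>+v. ennreal (avg_mean PW PU (chan_part (- A) PV v)) \<partial>count_space UNIV)"
    by (simp add: nn_integral_add nn_integral_measure_pmf)
  also have "(\<integral>\<^sup>+v. ennreal (sqrt (?Y v) / 2) \<partial>?Q) = ennreal (delta PW PU PV \<tau>)"
  proof -
    have "sqrt (?Y v) / 2 \<le> sqrt (2 powr \<tau>)" for v
      using real_sqrt_le_mono[OF Y(2)[of v]] real_sqrt_ge_zero[OF Y(1)[of v]] by linarith
    then show ?thesis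
      unfolding delta_eq using Y
      by (subst measure_pmf.ennreal_expectation_bounded[where B="sqrt (2 powr \<tau>)", symmetric]) auto
  qed
  also have "(\<integral>\<^sup>+v. ennreal (avg_mean PW PU (chan_part (- A) PV v)) \<partial>count_space UNIV)
      = ennreal (measure_pmf.prob (joint_pmf PW PU PV) (- A))"
    by (simp add: nn_integral_avg_mean_chan_part measure_pmf.emeasure_eq_measure)
  finally show ?thesis
    using delta_nonneg[of PW PU PV \<tau>] by (simp add: ennreal_plus add.commute)
qed

theorem theorem2:
  fixes PW :: "'w::countable pmf"
    and PU :: "'w \<Rightarrow> 'u::countable pmf"
    and PV :: "'w \<Rightarrow> 'u \<Rightarrow> 'v::countable pmf"
    and \<tau> :: real
  shows "(\<integral>\<^sup>+ c. ennreal (tv_dist (induced_PV PW PV c) (pmf (marg_V PW PU PV))) \<partial>codebook PU)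
           \<le> ennreal (measure_pmf.prob (joint_pmf PW PU PV) (- A_set PW PU PV \<tau>) + delta PW PU PV \<tau>)
         \<and> delta PW PU PV \<tau> \<le> 1 / 2 * 2 powr (\<tau> / 2)"
proof
  let ?A = "A_set PW PU PV \<tau>"
  have "(\<integral>\<^sup>+c. ennreal (tv_dist (induced_PV PW PV c) (pmf (marg_V PW PU PV))) \<partial>codebook PU)
      \<le> (\<integral>\<^sup>+c. \<integral>\<^sup>+v. ennreal (split_bound PW PU PV ?A v c / 2) \<partial>count_space UNIV \<partial>codebook PU)"
    by (intro nn_integral_mono tv_dist_le_split_bound)
  also have "\<dots> = (\<integral>\<^sup>+v. \<integral>\<^sup>+c. ennreal (split_bound PW PU PV ?A v c / 2) \<partial>codebook PU \<partial>count_space UNIV)"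
    by (rule nn_integral_count_space_nn_integral) (auto simp: split_bound_def)
  also have "\<dots> \<le> (\<integral>\<^sup>+v. ennreal (sqrt (diag_term PW PU (chan_part ?A PV v)) / 2
                                + avg_mean PW PU (chan_part (- ?A) PV v)) \<partial>count_space UNIV)"
    by (intro nn_integral_mono nn_integral_split_bound)
  also have "\<dots> = ennreal (measure_pmf.prob (joint_pmf PW PU PV) (- ?A) + delta PW PU PV \<tau>)"
    by (rule nn_integral_output_bound)
  finally show "(\<integral>\<^sup>+ c. ennreal (tv_dist (induced_PV PW PV c) (pmf (marg_V PW PU PV))) \<partial>codebook PU)
           \<le> ennreal (measure_pmf.prob (joint_pmf PW PU PV) (- ?A) + delta PW PU PV \<tau>)" .
  show "delta PW PU PV \<tau> \<le> 1 / 2 * 2 powr (\<tau> / 2)" by (rule delta_le)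
qed

end
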